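(* Let $\alpha(\cdot)$ and $\beta(\cdot)$ be continuous, positive, integrable functions on $(0,\infty)$ such that $\lim_{u\to\infty}\beta(u)/\alpha(u)=\rho\in[0,\infty]$. Then $$\lim_{z\to\infty}\frac{\int_0^\infty\phi(z;0,u)\beta(u)\,du}{\int_0^\infty\phi(z;0,u)\alpha(u)\,du}=\rho,$$ where $\phi(\cdot;0,u)$ is the $N(0,u)$ density. *)

theory Defs
  imports "HOL-Probability.Probability"
begin

text \<open>phi(z;0,u), the N(0,u) density (variance u), via the library's normal_density
  whose second argument is the standard deviation.\<close>
definition phi0 :: "real \<Rightarrow> real \<Rightarrow> real" where
  "phi0 z u = normal_density 0 (sqrt u) z"

end

theory Submission
  imports Defs "HOL-Real_Asymp.Real_Asymp"
begin

text \<open>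
  For z \<ge> 1 the density \<phi>(z;0,u) is uniformly of order exp(-z^2/(3M)) on 0 < u \<le> M,
  whereas the mixture \<integral>\<phi>(z;0,u)\<alpha>(u)du is at least of order exp(-z^2/(4M)), from the
  contribution of 2M \<le> u \<le> 3M where \<alpha> is bounded below by continuity. Hence for every M
  the part of both integrals over u \<le> M is negligible as z \<rightarrow> \<infinity>, and on u \<ge> M the
  ratio \<beta>/\<alpha> is already as close to \<rho> as we like.
\<close>

definition normal_variance_mixture :: "(real \<Rightarrow> real) \<Rightarrow> real \<Rightarrow> real" where
  "normal_variance_mixture w z = (LBINT u:{0<..}. phi0 z u * w u)"

lemma phi0_eq: "u > 0 \<Longrightarrow> phi0 z u = exp (- z\<^sup>2 / (2*u)) / sqrt (2*pi*u)"
  by (simp add: phi0_def normal_density_def)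

lemma phi0_nonneg: "0 \<le> phi0 z u"
  by (simp add: phi0_def)

lemma borel_measurable_phi0 [measurable]: "phi0 z \<in> borel_measurable borel"
  unfolding phi0_def normal_density_def by measurable

lemma exp_minus_le_inverse:
  fixes t :: real
  assumes "t > 0"
  shows "exp (- t) \<le> 1 / t"
proof -
  have "t \<le> exp t" using exp_ge_add_one_self[of t] by linarith
  then show ?thesis using assms by (simp add: exp_minus inverse_eq_divide frac_le)
qed

lemma phi0_le_small_variance:
  assumes z: "z \<ge> 1" and u: "0 < u" "u \<le> M"
  shows "phi0 z u \<le> 6 * sqrt M * exp (- z\<^sup>2 / (3*M))"
proof -
  have z2: "z\<^sup>2 \<ge> 1" using z by (simp add: one_le_power)
  have split: "z\<^sup>2 / (2*u) = z\<^sup>2 / (3*u) + z\<^sup>2 / (6*u)" using u by (simp add: field_simps)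
  have "z\<^sup>2 / (3*M) \<le> z\<^sup>2 / (3*u)" using u z2 by (intro divide_left_mono) auto
  moreover have "1 / (6*u) \<le> z\<^sup>2 / (6*u)" using u z2 by (intro divide_right_mono) auto
  ultimately have "- z\<^sup>2 / (2*u) \<le> - z\<^sup>2 / (3*M) + - (1 / (6*u))" using split by simp
  then have "exp (- z\<^sup>2 / (2*u)) \<le> exp (- z\<^sup>2 / (3*M)) * exp (- (1/(6*u)))"
    by (simp add: exp_add[symmetric])
  also have "\<dots> \<le> exp (- z\<^sup>2 / (3*M)) * (6*u)"
    using exp_minus_le_inverse[of "1/(6*u)"] u by (intro mult_left_mono) auto
  finally have num: "exp (- z\<^sup>2 / (2*u)) \<le> exp (- z\<^sup>2 / (3*M)) * (6*u)" .
  have "u / sqrt (2*pi*u) = sqrt u / sqrt (2*pi)"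
    using u by (simp add: real_sqrt_mult field_simps)
  also have "\<dots> \<le> sqrt u" using pi_gt3 u by (simp add: divide_le_eq)
  also have "\<dots> \<le> sqrt M" using u by simp
  finally have den: "u / sqrt (2*pi*u) \<le> sqrt M" .
  have "phi0 z u \<le> exp (- z\<^sup>2 / (3*M)) * (6*u) / sqrt (2*pi*u)"
    using num u by (simp add: phi0_eq divide_right_mono)
  also have "\<dots> = 6 * exp (- z\<^sup>2 / (3*M)) * (u / sqrt (2*pi*u))" by simp
  also have "\<dots> \<le> 6 * exp (- z\<^sup>2 / (3*M)) * sqrt M" using den by (intro mult_left_mono) auto
  finally show ?thesis by (simp add: ac_simps)
qed

lemma phi0_le_6:
  assumes "z \<ge> 1" "u > 0"
  shows "phi0 z u \<le> 6"
proof (cases "u \<le> 1")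
  case True
  have "6 * sqrt 1 * exp (- z\<^sup>2 / (3*1)) \<le> 6" by simp
  with phi0_le_small_variance[OF assms True] show ?thesis by (rule order.trans)
next
  case False
  then have "1 \<le> sqrt (2*pi*u)" using pi_gt3 by (simp add: mult_ge1_I)
  moreover have "exp (- z\<^sup>2 / (2*u)) \<le> 1" using False by simp
  ultimately have "exp (- z\<^sup>2 / (2*u)) \<le> sqrt (2*pi*u)" by linarith
  then have "phi0 z u \<le> 1" using assms(2) by (simp add: phi0_eq divide_le_eq_1)
  then show ?thesis by simp
qed

lemma phi0_ge_large_variance:
  assumes M: "M > 0" and u: "2*M \<le> u" "u \<le> 3*M"
  shows "exp (- z\<^sup>2 / (4*M)) / sqrt (6*pi*M) \<le> phi0 z u"
proof -
  have "z\<^sup>2 / (2*u) \<le> z\<^sup>2 / (4*M)" using M u by (intro divide_left_mono) auto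
  then have "exp (- z\<^sup>2 / (4*M)) / sqrt (6*pi*M) \<le> exp (- z\<^sup>2 / (2*u)) / sqrt (6*pi*M)"
    using M by (intro divide_right_mono) auto
  also have "\<dots> \<le> exp (- z\<^sup>2 / (2*u)) / sqrt (2*pi*u)"
    using M u by (intro divide_left_mono) auto
  finally show ?thesis using M u by (simp add: phi0_eq)
qed

lemma exp_minus_sq_div_negligible:
  fixes M d k :: real
  assumes "M > 0" "d > 0"
  shows "eventually (\<lambda>z. k * exp (- z\<^sup>2 / (3*M)) < d * exp (- z\<^sup>2 / (4*M))) at_top"
proof -
  define c where "c = 1 / (12*M)"
  have "c > 0" using assms by (simp add: c_def)
  then have "((\<lambda>z::real. exp (- c * z\<^sup>2)) \<longlongrightarrow> 0) at_top" by real_asymp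
  then have "((\<lambda>z. k * exp (- c * z\<^sup>2)) \<longlongrightarrow> 0) at_top" by (rule tendsto_mult_right_zero)
  then have "eventually (\<lambda>z. k * exp (- c * z\<^sup>2) < d) at_top"
    using assms(2) by (rule order_tendstoD)
  then show ?thesis
  proof eventually_elim
    case (elim z)
    have "exp (- z\<^sup>2 / (3*M)) = exp (- z\<^sup>2 / (4*M)) * exp (- c * z\<^sup>2)"
      using assms(1) by (simp add: c_def exp_add[symmetric] field_simps)
    then show ?case using elim by (simp add: ac_simps)
  qed
qed

lemma set_integrable_phi0_mult:
  assumes z: "z \<ge> 1" and f: "set_integrable lborel {0<..} (f :: real \<Rightarrow> real)"
  shows "set_integrable lborel {0<..} (\<lambda>u. phi0 z u * f u)"
proof (rule set_integrable_bound[where f = "\<lambda>u. 6 * f u"])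
  show "set_integrable lborel {0<..} (\<lambda>u. 6 * f u)" using f by simp
  have "(\<lambda>u. indicator {0<..} u *\<^sub>R f u) \<in> borel_measurable lborel"
    using f unfolding set_integrable_def by (rule borel_measurable_integrable)
  then have "(\<lambda>u. phi0 z u * (indicator {0<..} u *\<^sub>R f u)) \<in> borel_measurable lborel"
    by measurable
  then show "set_borel_measurable lborel {0<..} (\<lambda>u. phi0 z u * f u)"
    unfolding set_borel_measurable_def by (simp add: ac_simps)
  show "AE u in lborel. u \<in> {0<..} \<longrightarrow> norm (phi0 z u * f u) \<le> norm (6 * f u)"
    using phi0_le_6[OF z] phi0_nonneg[of z]
    by (intro AE_I2) (auto simp: abs_mult mult_right_mono)
qed

lemma normal_variance_mixture_cmult:
  "normal_variance_mixture (\<lambda>u. c * f u) z = c * normal_variance_mixture f z"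
  by (simp add: normal_variance_mixture_def mult.left_commute)

lemma normal_variance_mixture_lower_bound:
  fixes \<alpha> :: "real \<Rightarrow> real"
  assumes cont: "continuous_on {0<..} \<alpha>" and pos: "\<And>u. u > 0 \<Longrightarrow> \<alpha> u > 0"
    and int: "set_integrable lborel {0<..} \<alpha>" and M: "M > 0"
  obtains c where "c > 0" and "\<And>z. z \<ge> 1 \<Longrightarrow> c * exp (- z\<^sup>2 / (4*M)) \<le> normal_variance_mixture \<alpha> z"
proof -
  have "continuous_on {2*M..3*M} \<alpha>" using cont by (rule continuous_on_subset) (use M in auto)
  moreover have "{2*M..3*M} \<noteq> {}" using M by simp
  ultimately obtain v where v: "v \<in> {2*M..3*M}" "\<forall>u \<in> {2*M..3*M}. \<alpha> v \<le> \<alpha> u"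
    using continuous_attains_inf[OF compact_Icc] by blast
  define m where "m = \<alpha> v"
  have m: "m > 0" using v(1) M pos by (auto simp: m_def)
  show ?thesis
  proof
    show "m * M / sqrt (6*pi*M) > 0" using m M by simp
    fix z :: real assume z: "z \<ge> 1"
    define h where "h = exp (- z\<^sup>2 / (4*M)) / sqrt (6*pi*M) * m"
    have restrict: "(\<lambda>u. indicator {0<..} u *\<^sub>R (h * indicator {2*M..3*M} u)) = (\<lambda>u. h * indicator {2*M..3*M} u)"
      using M by (auto simp: fun_eq_iff split: split_indicator)
    have "set_integrable lborel {0<..} (\<lambda>u. h * indicator {2*M..3*M} u)"
      unfolding set_integrable_def restrict by (intro integrable_mult_right integrable_real_indicator) (use M in auto)
    then have "(LBINT u:{0<..}. h * indicator {2*M..3*M} u) \<le> normal_variance_mixture \<alpha> z"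
      unfolding normal_variance_mixture_def
    proof (rule set_integral_mono[OF _ set_integrable_phi0_mult[OF z int]])
      fix u :: real assume "u \<in> {0<..}"
      then have \<phi>\<alpha>: "0 \<le> phi0 z u" "0 < \<alpha> u" using phi0_nonneg pos by auto
      show "h * indicator {2*M..3*M} u \<le> phi0 z u * \<alpha> u"
      proof (cases "u \<in> {2*M..3*M}")
        case True
        have "h \<le> phi0 z u * \<alpha> u"
          unfolding h_def m_def
          using phi0_ge_large_variance[OF M, of u z] True v(2) \<phi>\<alpha> m
          by (intro mult_mono) (auto simp: m_def)
        then show ?thesis using True by simp
      qed (use \<phi>\<alpha> in simp)
    qed
    moreover have "(LBINT u:{0<..}. h * indicator {2*M..3*M} u) = h * M"
      unfolding set_lebesgue_integral_def restrict using M by simp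
    moreover have "h * M = m * M / sqrt (6*pi*M) * exp (- z\<^sup>2 / (4*M))" by (simp add: h_def)
    ultimately show "m * M / sqrt (6*pi*M) * exp (- z\<^sup>2 / (4*M)) \<le> normal_variance_mixture \<alpha> z"
      by linarith
  qed
qed

lemma normal_variance_mixture_pos:
  fixes \<alpha> :: "real \<Rightarrow> real"
  assumes "continuous_on {0<..} \<alpha>" "\<And>u. u > 0 \<Longrightarrow> \<alpha> u > 0"
    and "set_integrable lborel {0<..} \<alpha>" and "z \<ge> 1"
  shows "normal_variance_mixture \<alpha> z > 0"
proof -
  obtain c where "c > 0" "c * exp (- z\<^sup>2 / 4) \<le> normal_variance_mixture \<alpha> z"
    using normal_variance_mixture_lower_bound[OF assms(1-3), of 1] assms(4) by auto
  then show ?thesis using mult_pos_pos[OF \<open>c > 0\<close> exp_gt_zero[of "- z\<^sup>2 / 4"]] by linarith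
qed

lemma small_variances_negligible:
  fixes \<alpha> :: "real \<Rightarrow> real"
  assumes "continuous_on {0<..} \<alpha>" "\<And>u. u > 0 \<Longrightarrow> \<alpha> u > 0"
    and "set_integrable lborel {0<..} \<alpha>" and "M > 0" "\<delta> > 0"
  shows "eventually (\<lambda>z. C * exp (- z\<^sup>2 / (3*M)) < \<delta> * normal_variance_mixture \<alpha> z) at_top"
proof -
  obtain c where c: "c > 0" "\<And>z. z \<ge> 1 \<Longrightarrow> c * exp (- z\<^sup>2 / (4*M)) \<le> normal_variance_mixture \<alpha> z"
    using normal_variance_mixture_lower_bound[OF assms(1-4)] by blast
  have "eventually (\<lambda>z. z \<ge> 1 \<and> C * exp (- z\<^sup>2 / (3*M)) < (\<delta> * c) * exp (- z\<^sup>2 / (4*M))) at_top"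
    using assms(4,5) c(1) by (intro eventually_conj eventually_ge_at_top exp_minus_sq_div_negligible) auto
  then show ?thesis
  proof eventually_elim
    case (elim z)
    have "\<delta> * (c * exp (- z\<^sup>2 / (4*M))) \<le> \<delta> * normal_variance_mixture \<alpha> z"
      using c(2)[of z] elim assms(5) by (intro mult_left_mono) auto
    then show ?case using elim by (simp add: mult.assoc)
  qed
qed

lemma normal_variance_mixture_le_if_le_at_top:
  fixes f g :: "real \<Rightarrow> real"
  assumes f: "set_integrable lborel {0<..} f" and g: "set_integrable lborel {0<..} g"
    and g_nonneg: "\<And>u. u > 0 \<Longrightarrow> 0 \<le> g u" and le: "\<And>u. u \<ge> M \<Longrightarrow> f u \<le> g u"
    and M: "M > 0" and z: "z \<ge> 1"
  shows "normal_variance_mixture f z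
           \<le> normal_variance_mixture g z + 6 * sqrt M * exp (- z\<^sup>2 / (3*M)) * (LBINT u:{0<..}. \<bar>f u\<bar>)"
proof -
  define E where "E = 6 * sqrt M * exp (- z\<^sup>2 / (3*M))"
  have int_g: "set_integrable lborel {0<..} (\<lambda>u. phi0 z u * g u)"
    using z g by (rule set_integrable_phi0_mult)
  have int_f: "set_integrable lborel {0<..} (\<lambda>u. E * \<bar>f u\<bar>)"
    using f by (simp add: set_integrable_abs)
  have "(LBINT u:{0<..}. phi0 z u * f u) \<le> (LBINT u:{0<..}. phi0 z u * g u + E * \<bar>f u\<bar>)"
  proof (rule set_integral_mono[OF set_integrable_phi0_mult[OF z f] set_integral_add(1)[OF int_g int_f]])
    fix u :: real assume "u \<in> {0<..}"
    then have u: "u > 0" by simp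
    have \<phi>: "0 \<le> phi0 z u" by (rule phi0_nonneg)
    show "phi0 z u * f u \<le> phi0 z u * g u + E * \<bar>f u\<bar>"
    proof (cases "u \<le> M")
      case True
      have "phi0 z u * f u \<le> phi0 z u * \<bar>f u\<bar>" using \<phi> by (simp add: mult_left_mono)
      also have "\<dots> \<le> E * \<bar>f u\<bar>"
        using phi0_le_small_variance[OF z u True] by (simp add: E_def mult_right_mono)
      finally show ?thesis using mult_nonneg_nonneg[OF \<phi> g_nonneg[OF u]] by linarith
    next
      case False
      have "phi0 z u * f u \<le> phi0 z u * g u" using \<phi> le[of u] False by (simp add: mult_left_mono)
      moreover have "0 \<le> E * \<bar>f u\<bar>" using M by (simp add: E_def)
      ultimately show ?thesis by simp
    qed
  qed
  then show ?thesis
    using set_integral_add(2)[OF int_g int_f] by (simp add: normal_variance_mixture_def E_def)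
qed

lemma eventually_ratio_gtE:
  fixes \<alpha> \<beta> :: "real \<Rightarrow> real"
  assumes "\<And>u. u > 0 \<Longrightarrow> \<alpha> u > 0" and "eventually (\<lambda>u. s < \<beta> u / \<alpha> u) at_top"
  obtains M where "M > 0" and "\<And>u. u \<ge> M \<Longrightarrow> s * \<alpha> u \<le> \<beta> u"
proof -
  obtain M0 where M0: "\<And>u. u \<ge> M0 \<Longrightarrow> s < \<beta> u / \<alpha> u"
    using assms(2) by (auto simp: eventually_at_top_linorder)
  show ?thesis
  proof (rule that[of "max M0 1"])
    fix u assume "u \<ge> max M0 1"
    then show "s * \<alpha> u \<le> \<beta> u"
      using M0[of u] assms(1)[of u] by (simp add: pos_less_divide_eq)
  qed simp
qed

lemma eventually_ratio_lessE:
  fixes \<alpha> \<beta> :: "real \<Rightarrow> real"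
  assumes "\<And>u. u > 0 \<Longrightarrow> \<alpha> u > 0" and "eventually (\<lambda>u. \<beta> u / \<alpha> u < t) at_top"
  obtains M where "M > 0" and "\<And>u. u \<ge> M \<Longrightarrow> \<beta> u \<le> t * \<alpha> u"
proof -
  obtain M0 where M0: "\<And>u. u \<ge> M0 \<Longrightarrow> \<beta> u / \<alpha> u < t"
    using assms(2) by (auto simp: eventually_at_top_linorder)
  show ?thesis
  proof (rule that[of "max M0 1"])
    fix u assume "u \<ge> max M0 1"
    then show "\<beta> u \<le> t * \<alpha> u"
      using M0[of u] assms(1)[of u] by (simp add: pos_divide_less_eq)
  qed simp
qed

lemma normal_variance_mixture_ratio_eventually_gt:
  fixes \<alpha> \<beta> :: "real \<Rightarrow> real"
  assumes cont: "continuous_on {0<..} \<alpha>" and \<alpha>_pos: "\<And>u. u > 0 \<Longrightarrow> \<alpha> u > 0"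
    and \<beta>_nonneg: "\<And>u. u > 0 \<Longrightarrow> 0 \<le> \<beta> u"
    and \<alpha>: "set_integrable lborel {0<..} \<alpha>" and \<beta>: "set_integrable lborel {0<..} \<beta>"
    and ratio: "eventually (\<lambda>u. s < \<beta> u / \<alpha> u) at_top" and "a < s"
  shows "eventually (\<lambda>z. a < normal_variance_mixture \<beta> z / normal_variance_mixture \<alpha> z) at_top"
proof -
  obtain M where M: "M > 0" "\<And>u. u \<ge> M \<Longrightarrow> s * \<alpha> u \<le> \<beta> u"
    using eventually_ratio_gtE[OF \<alpha>_pos ratio] by blast
  define C where "C = 6 * sqrt M * (LBINT u:{0<..}. \<bar>s * \<alpha> u\<bar>)"
  have "eventually (\<lambda>z. z \<ge> 1 \<and> C * exp (- z\<^sup>2 / (3*M)) < (s - a) * normal_variance_mixture \<alpha> z) at_top"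
    using \<open>a < s\<close> by (intro eventually_conj eventually_ge_at_top small_variances_negligible[OF cont \<alpha>_pos \<alpha> M(1)]) auto
  then show ?thesis
  proof eventually_elim
    case (elim z)
    have "s * normal_variance_mixture \<alpha> z \<le> normal_variance_mixture \<beta> z + C * exp (- z\<^sup>2 / (3*M))"
      using normal_variance_mixture_le_if_le_at_top[of "\<lambda>u. s * \<alpha> u", OF _ \<beta> \<beta>_nonneg M(2,1)] elim \<alpha>
      by (simp add: normal_variance_mixture_cmult C_def ac_simps)
    then show ?case
      using elim normal_variance_mixture_pos[OF cont \<alpha>_pos \<alpha>, of z] by (simp add: less_divide_eq algebra_simps)
  qed
qed

lemma normal_variance_mixture_ratio_eventually_less:
  fixes \<alpha> \<beta> :: "real \<Rightarrow> real"
  assumes cont: "continuous_on {0<..} \<alpha>" and \<alpha>_pos: "\<And>u. u > 0 \<Longrightarrow> \<alpha> u > 0"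
    and \<alpha>: "set_integrable lborel {0<..} \<alpha>" and \<beta>: "set_integrable lborel {0<..} \<beta>"
    and ratio: "eventually (\<lambda>u. \<beta> u / \<alpha> u < t) at_top" and "0 \<le> t" "t < b"
  shows "eventually (\<lambda>z. normal_variance_mixture \<beta> z / normal_variance_mixture \<alpha> z < b) at_top"
proof -
  obtain M where M: "M > 0" "\<And>u. u \<ge> M \<Longrightarrow> \<beta> u \<le> t * \<alpha> u"
    using eventually_ratio_lessE[OF \<alpha>_pos ratio] by blast
  define C where "C = 6 * sqrt M * (LBINT u:{0<..}. \<bar>\<beta> u\<bar>)"
  have "eventually (\<lambda>z. z \<ge> 1 \<and> C * exp (- z\<^sup>2 / (3*M)) < (b - t) * normal_variance_mixture \<alpha> z) at_top"
    using \<open>t < b\<close> by (intro eventually_conj eventually_ge_at_top small_variances_negligible[OF cont \<alpha>_pos \<alpha> M(1)]) auto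
  then show ?thesis
  proof eventually_elim
    case (elim z)
    have "normal_variance_mixture \<beta> z \<le> t * normal_variance_mixture \<alpha> z + C * exp (- z\<^sup>2 / (3*M))"
      using normal_variance_mixture_le_if_le_at_top[of \<beta> "\<lambda>u. t * \<alpha> u", OF \<beta> _ _ M(2,1)] elim \<alpha> \<alpha>_pos \<open>0 \<le> t\<close>
      by (simp add: normal_variance_mixture_cmult C_def ac_simps less_imp_le)
    then show ?case
      using elim normal_variance_mixture_pos[OF cont \<alpha>_pos \<alpha>, of z] by (simp add: divide_less_eq algebra_simps)
  qed
qed

theorem lemmaS5:
  fixes \<alpha> \<beta> :: "real \<Rightarrow> real" and \<rho> :: ereal
  assumes "continuous_on {0<..} \<alpha>" and "continuous_on {0<..} \<beta>"
    and "\<And>u. u > 0 \<Longrightarrow> \<alpha> u > 0" and "\<And>u. u > 0 \<Longrightarrow> \<beta> u > 0"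
    and "set_integrable lborel {0<..} \<alpha>" and "set_integrable lborel {0<..} \<beta>"
    and "0 \<le> \<rho>"
    and "((\<lambda>u. ereal (\<beta> u / \<alpha> u)) \<longlongrightarrow> \<rho>) at_top"
  shows "((\<lambda>z. ereal ((LBINT u:{0<..}. phi0 z u * \<beta> u) / (LBINT u:{0<..}. phi0 z u * \<alpha> u)))
           \<longlongrightarrow> \<rho>) at_top"
proof (rule order_tendstoI, unfold normal_variance_mixture_def[symmetric])
  fix a assume "a < \<rho>"
  then obtain s where s: "a < ereal s" "ereal s < \<rho>" using ereal_dense2 by blast
  then obtain r where "a < ereal r" "ereal r < ereal s" using ereal_dense2 by blast
  then have rs: "a < ereal r" "r < s" "ereal s < \<rho>" using s by simp_all
  have "eventually (\<lambda>u. s < \<beta> u / \<alpha> u) at_top"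
    using order_tendstoD(1)[OF assms(8) rs(3)] by simp
  moreover have "\<And>u. u > 0 \<Longrightarrow> 0 \<le> \<beta> u" using assms(4) by (simp add: less_imp_le)
  ultimately have "eventually (\<lambda>z. r < normal_variance_mixture \<beta> z / normal_variance_mixture \<alpha> z) at_top"
    using normal_variance_mixture_ratio_eventually_gt[OF assms(1,3) _ assms(5,6)] rs(2) by blast
  then show "eventually (\<lambda>z. a < ereal (normal_variance_mixture \<beta> z / normal_variance_mixture \<alpha> z)) at_top"
    by eventually_elim (rule order.strict_trans[OF rs(1)], simp)
next
  fix b assume "\<rho> < b"
  then obtain r where r: "\<rho> < ereal r" "ereal r < b" using ereal_dense2 by blast
  then obtain t where "\<rho> < ereal t" "ereal t < ereal r" using ereal_dense2 by blast
  then have tr: "\<rho> < ereal t" "t < r" "ereal r < b" using r by simp_all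
  have "eventually (\<lambda>u. \<beta> u / \<alpha> u < t) at_top"
    using order_tendstoD(2)[OF assms(8) tr(1)] by simp
  moreover have "0 \<le> t" using order.strict_trans1[OF assms(7) tr(1)] by simp
  ultimately have "eventually (\<lambda>z. normal_variance_mixture \<beta> z / normal_variance_mixture \<alpha> z < r) at_top"
    using normal_variance_mixture_ratio_eventually_less[OF assms(1,3,5,6)] tr(2) by blast
  then show "eventually (\<lambda>z. ereal (normal_variance_mixture \<beta> z / normal_variance_mixture \<alpha> z) < b) at_top"
    by eventually_elim (rule order.strict_trans[OF _ tr(3)], simp)
qed

end
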